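(* Let $(u_n)_{n<\omega}$ be an $\omega$-sequence of words such that the product $u_0u_1\cdots u_n$ is prime for each $n<\omega$. Then the $\omega$-product $u_0u_1u_2\cdots$ is prime.
   Context: $A$ is a finite alphabet with a linear order $<_A$. Words are sequences of letters indexed by countable ordinals; $x^\alpha$ is the concatenation of $\alpha$ copies of $x$. A suffix of $x$ is $x[\gamma,|x|)$, proper if $0<\gamma<|x|$. Write $x<_{str}x'$ if there are letters $a<_Ab$ and words $y,z,z'$ with $x=yaz$, $x'=ybz'$; $x\le_{lex}x'$ iff $x$ is a prefix of $x'$ or $x<_{str}x'$. A word $x$ is primitive if $x=y^\alpha$ implies $\alpha=1$ and $y=x$. A word $w$ is prime if it is primitive and every proper suffix $z$ of $w$ satisfies $w\le_{lex}z$. *)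

theory Defs
  imports Main "HOL-Library.Nat_Bijection"
begin

text \<open>A transfinite word over alphabet 'a: a well-order on a set of naturals
(its positions; hence its length is a countable ordinal) together with a labelling
of positions by letters. Words are considered up to label-preserving order isomorphism.\<close>

type_synonym 'a word = "nat rel \<times> (nat \<Rightarrow> 'a)"

definition wf_word :: "'a word \<Rightarrow> bool" where
  "wf_word x \<longleftrightarrow> Well_order (fst x)"

definition word_iso :: "'a word \<Rightarrow> 'a word \<Rightarrow> bool" where
  "word_iso x y \<longleftrightarrow> (\<exists>h. bij_betw h (Field (fst x)) (Field (fst y)) \<and>
     (\<forall>p\<in>Field (fst x). \<forall>q\<in>Field (fst x). (p,q) \<in> fst x \<longleftrightarrow> (h p, h q) \<in> fst y) \<and>
     (\<forall>p\<in>Field (fst x). snd y (h p) = snd x p))"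

definition restr :: "'a word \<Rightarrow> nat set \<Rightarrow> 'a word" where
  "restr x S = (fst x \<inter> (S \<times> S), snd x)"

definition init_seg :: "nat rel \<Rightarrow> nat set \<Rightarrow> bool" where
  "init_seg r S \<longleftrightarrow> S \<subseteq> Field r \<and> (\<forall>p q. (p,q) \<in> r \<and> q \<in> S \<longrightarrow> p \<in> S)"

definition is_prefix :: "'a word \<Rightarrow> 'a word \<Rightarrow> bool" where
  "is_prefix x x' \<longleftrightarrow> (\<exists>S. init_seg (fst x') S \<and> word_iso x (restr x' S))"

definition below :: "nat rel \<Rightarrow> nat \<Rightarrow> nat set" where
  "below r p = {q. (q,p) \<in> r \<and> q \<noteq> p}"

definition str_less :: "('a::linorder) word \<Rightarrow> 'a word \<Rightarrow> bool" where
  "str_less x x' \<longleftrightarrow> (\<exists>p\<in>Field (fst x). \<exists>p'\<in>Field (fst x').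
     word_iso (restr x (below (fst x) p)) (restr x' (below (fst x') p')) \<and> snd x p < snd x' p')"

definition lex_le :: "('a::linorder) word \<Rightarrow> 'a word \<Rightarrow> bool" where
  "lex_le x x' \<longleftrightarrow> is_prefix x x' \<or> str_less x x'"

definition proper_suffix :: "'a word \<Rightarrow> 'a word \<Rightarrow> bool" where
  "proper_suffix x z \<longleftrightarrow> (\<exists>p\<in>Field (fst x). (\<exists>q\<in>Field (fst x). q \<noteq> p \<and> (q,p) \<in> fst x) \<and>
     z = restr x {q. (p,q) \<in> fst x})"

definition is_power :: "'a word \<Rightarrow> 'a word \<Rightarrow> nat rel \<Rightarrow> bool" where
  "is_power x y \<alpha> \<longleftrightarrow> (\<exists>h. bij_betw h (Field (fst x)) (Field \<alpha> \<times> Field (fst y)) \<and>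
     (\<forall>p\<in>Field (fst x). \<forall>q\<in>Field (fst x). (p,q) \<in> fst x \<longleftrightarrow>
        ((fst (h p) \<noteq> fst (h q) \<and> (fst (h p), fst (h q)) \<in> \<alpha>) \<or>
         (fst (h p) = fst (h q) \<and> (snd (h p), snd (h q)) \<in> fst y))) \<and>
     (\<forall>p\<in>Field (fst x). snd x p = snd y (snd (h p))))"

definition primitive :: "'a word \<Rightarrow> bool" where
  "primitive x \<longleftrightarrow> (\<forall>y \<alpha>. wf_word y \<and> Well_order \<alpha> \<and> is_power x y \<alpha> \<longrightarrow>
      card (Field \<alpha>) = 1 \<and> word_iso y x)"

definition prime_word :: "('a::linorder) word \<Rightarrow> bool" where
  "prime_word w \<longleftrightarrow> primitive w \<and> (\<forall>z. proper_suffix w z \<longrightarrow> lex_le w z)"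

definition block_prod :: "nat set \<Rightarrow> (nat \<Rightarrow> 'a word) \<Rightarrow> 'a word" where
  "block_prod I u =
    ({(prod_encode (i,p), prod_encode (j,q)) | i p j q. i \<in> I \<and> j \<in> I \<and>
        p \<in> Field (fst (u i)) \<and> q \<in> Field (fst (u j)) \<and> (i < j \<or> (i = j \<and> (p,q) \<in> fst (u i)))},
     \<lambda>k. snd (u (fst (prod_decode k))) (snd (prod_decode k)))"

end

theory Submission
  imports Defs
begin

text \<open>
  Write \<open>w\<close> for the \<open>\<omega>\<close>-product and \<open>w\<^sub>n = u\<^sub>0 \<cdots> u\<^sub>n\<close>; the positions of the \<open>w\<^sub>n\<close>
  form an increasing chain of initial segments of \<open>w\<close> exhausting it.

  Let \<open>z\<close> be the proper suffix of \<open>w\<close> starting at position \<open>p\<close>. Once \<open>w\<^sub>n\<close> contains \<open>p\<close>, the suffix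
  \<open>z\<^sub>n\<close> of \<open>w\<^sub>n\<close> at \<open>p\<close> is an initial segment of \<open>z\<close>, and primality gives \<open>w\<^sub>n \<le>\<^sub>l\<^sub>e\<^sub>x z\<^sub>n\<close>. A strict
  difference between some \<open>w\<^sub>n\<close> and \<open>z\<^sub>n\<close> persists between \<open>w\<close> and \<open>z\<close>. Otherwise every \<open>w\<^sub>n\<close> is a
  prefix of \<open>z\<close>; embeddings of well-orders are unique, so these embeddings are compatible and
  glue to an embedding of \<open>w\<close> into \<open>z\<close>.

  For primitivity, let \<open>w = y\<^sup>\<alpha>\<close> with \<open>\<alpha> \<ge> 2\<close> and take \<open>n\<close> such that \<open>w\<^sub>n\<close> reaches into a second
  copy of \<open>y\<close>. If \<open>w\<^sub>n\<close> consists of whole copies of \<open>y\<close>, it is not primitive. Otherwise its suffix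
  starting at the beginning of an incomplete copy is a proper prefix of \<open>y\<close>, hence of \<open>w\<^sub>n\<close>, and
  no word is lexicographically below one of its proper prefixes.
\<close>

section \<open>Prefixes as embeddings of well-orders\<close>

lemma init_seg_eq_ofilter: "init_seg r S = ofilter r S"
  by (auto simp: init_seg_def ofilter_def under_def)

lemma below_eq_underS: "below r p = underS r p"
  by (auto simp: below_def underS_def)

lemma Well_order_Field_Restr:
  "Well_order r \<Longrightarrow> A \<subseteq> Field r \<Longrightarrow> Field (Restr r A) = A"
  using Refl_Field_Restr2 wo_rel.REFL unfolding wo_rel_def by blast

lemma Well_order_least:
  assumes "Well_order r" "A \<subseteq> Field r" "A \<noteq> {}"
  obtains m where "m \<in> A" "\<forall>b\<in>A. (m, b) \<in> r"
  using assms Linear_order_Well_order_iff[of r] wo_rel.LIN unfolding wo_rel_def by blast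

lemma restr_pair: "restr (r, L) S = (Restr r S, L)"
  by (simp add: restr_def)

lemma ofilter_Restr_ofilter:
  assumes "Well_order r" "ofilter r A" "ofilter r B" "A \<subseteq> B"
  shows "ofilter (Restr r B) A"
  using assms unfolding ofilter_def under_def
  by (auto simp: Field_Restr_ofilter[OF assms(1,3)])

lemma underS_Restr_ofilter:
  assumes "ofilter r A" "a \<in> A"
  shows "underS (Restr r A) a = underS r a"
  using assms by (auto simp: ofilter_def under_def underS_def)

lemma embed_Restr_ofilter:
  assumes "Well_order r" "ofilter r A" "embed r r' f"
  shows "embed (Restr r A) r' f"
  using comp_embed[OF iffD1[OF ofilter_embed[OF assms(1)] assms(2), THEN conjunct2] assms(3)]
  by simp

lemma word_iso_iff_iso:
  "word_iso (r, L) (r', L') \<longleftrightarrow> (\<exists>f. iso r r' f \<and> (\<forall>p\<in>Field r. L' (f p) = L p))"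
  unfolding word_iso_def iso_iff2 by auto

lemma is_prefix_iff_embed:
  assumes "Well_order r" "Well_order r'"
  shows "is_prefix (r, L) (r', L') \<longleftrightarrow> (\<exists>f. embed r r' f \<and> (\<forall>p\<in>Field r. L' (f p) = L p))"
proof
  assume "is_prefix (r, L) (r', L')"
  then obtain S f where S: "ofilter r' S" and f: "iso r (Restr r' S) f" "\<forall>p\<in>Field r. L' (f p) = L p"
    unfolding is_prefix_def init_seg_eq_ofilter restr_pair word_iso_iff_iso by auto
  have "embed (Restr r' S) r' id"
    using S ofilter_embed[OF assms(2)] by blast
  then have "embed r r' (id \<circ> f)"
    using comp_embed f(1) unfolding iso_def by blast
  then show "\<exists>f. embed r r' f \<and> (\<forall>p\<in>Field r. L' (f p) = L p)" using f(2) by (auto simp: comp_def)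
next
  assume "\<exists>f. embed r r' f \<and> (\<forall>p\<in>Field r. L' (f p) = L p)"
  then obtain f where f: "embed r r' f" "\<forall>p\<in>Field r. L' (f p) = L p" by blast
  define S where "S = f ` Field r"
  have S: "ofilter r' S"
    unfolding S_def by (rule embed_Field_ofilter[OF assms f(1)])
  have WS: "Well_order (Restr r' S)"
    using Well_order_Restr[OF assms(2)] .
  have FS: "Field (Restr r' S) = S"
    using Field_Restr_ofilter[OF assms(2) S] .
  have "compat r (Restr r' S) f"
    using embed_compat[OF f(1)] unfolding compat_def S_def by (auto intro: FieldI1 FieldI2)
  moreover have "ofilter (Restr r' S) (f ` Field r)"
    using wo_rel.Field_ofilter[of "Restr r' S"] WS FS unfolding wo_rel_def S_def by simp
  ultimately have "embed r (Restr r' S) f"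
    using embed_inj_on[OF assms(1) f(1)] embed_iff_compat_inj_on_ofilter[OF assms(1) WS] by blast
  then have "iso r (Restr r' S) f"
    using iso_iff[OF assms(1)] Field_Restr_ofilter[OF assms(2) S] S_def by blast
  then show "is_prefix (r, L) (r', L')"
    unfolding is_prefix_def init_seg_eq_ofilter restr_pair word_iso_iff_iso fst_conv
    using S f(2) by blast
qed

lemma str_less_Restr_ofilter:
  assumes "ofilter r A" "ofilter r' A'" "str_less (Restr r A, L) (Restr r' A', L')"
  shows "str_less (r, L) (r', L')"
proof -
  obtain p p' where p: "p \<in> Field (Restr r A)" and p': "p' \<in> Field (Restr r' A')"
    and less: "L p < L' p'"
    and iso: "word_iso (Restr (Restr r A) (underS (Restr r A) p), L)
                       (Restr (Restr r' A') (underS (Restr r' A') p'), L')"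
    using assms(3) unfolding str_less_def below_eq_underS restr_pair fst_conv snd_conv by blast
  have pA: "p \<in> A" and pA': "p' \<in> A'"
    using p p' Field_Restr_subset by fast+
  have "underS r p \<subseteq> A" "underS r' p' \<subseteq> A'"
    using assms(1,2) pA pA' underS_subset_under unfolding ofilter_def by fast+
  then have "Restr (Restr r A) (underS r p) = Restr r (underS r p)"
    and "Restr (Restr r' A') (underS r' p') = Restr r' (underS r' p')"
    by auto
  then have "word_iso (Restr r (underS r p), L) (Restr r' (underS r' p'), L')"
    using iso underS_Restr_ofilter[OF assms(1) pA] underS_Restr_ofilter[OF assms(2) pA'] by simp
  moreover have "p \<in> Field r" "p' \<in> Field r'"
    using assms(1,2) pA pA' unfolding ofilter_def by blast+
  ultimately show ?thesis
    unfolding str_less_def below_eq_underS restr_pair fst_conv snd_conv using less by blast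
qed

lemma is_prefix_Restr_ofilter:
  assumes "Well_order r" "Well_order r'" "ofilter r' A'" "is_prefix (r, L) (Restr r' A', L')"
  shows "is_prefix (r, L) (r', L')"
proof -
  obtain f where f: "embed r (Restr r' A') f" "\<forall>p\<in>Field r. L' (f p) = L p"
    using assms(4) is_prefix_iff_embed[OF assms(1) Well_order_Restr[OF assms(2)]] by blast
  have "embed (Restr r' A') r' id"
    using assms(3) ofilter_embed[OF assms(2)] by blast
  then have "embed r r' (id \<circ> f)"
    using comp_embed f(1) by blast
  then show ?thesis
    using f(2) is_prefix_iff_embed[OF assms(1,2)] by auto
qed

lemma proper_suffix_Restr:
  assumes "(c, s) \<in> r" "c \<noteq> s" "c \<in> X" "s \<in> X"
  shows "proper_suffix (Restr r X, L) (Restr r {q \<in> X. (s, q) \<in> r}, L)"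
  unfolding proper_suffix_def restr_pair fst_conv
proof (rule bexI[of _ s])
  have cs: "(c, s) \<in> Restr r X"
    using assms by blast
  then show "s \<in> Field (Restr r X)"
    by (rule FieldI2)
  have "{q. (s, q) \<in> Restr r X} = {q \<in> X. (s, q) \<in> r}"
    using assms(4) by blast
  moreover have "Restr (Restr r X) {q \<in> X. (s, q) \<in> r} = Restr r {q \<in> X. (s, q) \<in> r}"
    by blast
  moreover have "c \<in> Field (Restr r X)"
    using cs by (rule FieldI1)
  ultimately show "(\<exists>q\<in>Field (Restr r X). q \<noteq> s \<and> (q, s) \<in> Restr r X) \<and>
      (Restr r {q \<in> X. (s, q) \<in> r}, L) = (Restr (Restr r X) {q. (s, q) \<in> Restr r X}, L)"
    using cs assms(2) by auto
qed

lemma mono_common_index: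
  assumes "mono (B :: nat \<Rightarrow> 'b set)" "x \<in> B i" "y \<in> B j"
  shows "x \<in> B (max i j) \<and> y \<in> B (max i j)"
  using assms monoD[OF assms(1), of i "max i j"] monoD[OF assms(1), of j "max i j"] by auto

lemma embed_chain_consistent:
  assumes W: "Well_order r" "Well_order r'" and B: "mono (B :: nat \<Rightarrow> nat set)" "\<And>n. ofilter r (B n)"
    and f: "\<And>n. embed (Restr r (B n)) r' (f n)"
    and "n \<le> m" "x \<in> B n"
  shows "f n x = f m x"
proof -
  have sub: "B n \<subseteq> B m"
    using monoD[OF B(1) assms(6)] .
  have "ofilter (Restr r (B m)) (B n)"
    using ofilter_Restr_ofilter[OF W(1) B(2) B(2) sub] .
  then have "embed (Restr (Restr r (B m)) (B n)) r' (f m)"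
    using embed_Restr_ofilter[OF Well_order_Restr[OF W(1)] _ f] by blast
  moreover have "Restr (Restr r (B m)) (B n) = Restr r (B n)"
    using sub by auto
  ultimately have "embed (Restr r (B n)) r' (f m)" by simp
  then show ?thesis
    using embed_unique[OF Well_order_Restr[OF W(1)] W(2) f] Field_Restr_ofilter[OF W(1) B(2)] assms(7)
    by blast
qed

lemma embed_chain_Union:
  assumes W: "Well_order r" "Well_order r'" and B: "mono (B :: nat \<Rightarrow> nat set)" "\<And>n. ofilter r (B n)"
    and FB: "Field r = (\<Union>n. B n)"
    and f: "\<And>n. embed (Restr r (B n)) r' (f n)"
  obtains g where "embed r r' g" "\<And>n x. x \<in> B n \<Longrightarrow> g x = f n x"
proof -
  have WB: "Well_order (Restr r (B n))" for n
    using Well_order_Restr[OF W(1)] .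
  have FRB: "Field (Restr r (B n)) = B n" for n
    using Field_Restr_ofilter[OF W(1) B(2)] .
  define g where "g x = f (LEAST n. x \<in> B n) x" for x
  have g: "g x = f n x" if "x \<in> B n" for x n
    using embed_chain_consistent[OF W B f Least_le[of "\<lambda>n. x \<in> B n", OF that]
        LeastI[of "\<lambda>n. x \<in> B n", OF that]]
    unfolding g_def .
  have "compat r r' g"
  proof (unfold compat_def, intro allI impI)
    fix a b assume ab: "(a, b) \<in> r"
    then obtain i j where "a \<in> B i" "b \<in> B j"
      using FieldI1[OF ab] FieldI2[OF ab] FB by blast
    then obtain n where n: "a \<in> B n" "b \<in> B n"
      using mono_common_index[OF B(1)] by blast
    then have "(a, b) \<in> Restr r (B n)"
      using ab by blast
    then have "(f n a, f n b) \<in> r'"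
      using embed_compat[OF f] unfolding compat_def by blast
    then show "(g a, g b) \<in> r'"
      using g n by simp
  qed
  moreover have "inj_on g (Field r)"
  proof (rule inj_onI)
    fix a b assume "a \<in> Field r" "b \<in> Field r" "g a = g b"
    then obtain i j where "a \<in> B i" "b \<in> B j"
      using FB by blast
    then obtain n where n: "a \<in> B n" "b \<in> B n"
      using mono_common_index[OF B(1)] by blast
    moreover from this have "f n a = f n b"
      using g \<open>g a = g b\<close> by simp
    ultimately show "a = b"
      using embed_inj_on[OF WB f, of n] unfolding FRB inj_on_def by blast
  qed
  moreover have "ofilter r' (g ` Field r)"
  proof -
    have "g ` B n = f n ` B n" for n
      using g by (simp cong: image_cong)
    then have "g ` Field r = (\<Union>n. f n ` B n)"
      unfolding FB image_UN by simp
    moreover have "ofilter r' (f n ` B n)" for n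
      using embed_Field_ofilter[OF WB W(2) f, of n] unfolding FRB .
    ultimately show ?thesis
      using wo_rel.ofilter_UNION[of r' UNIV "\<lambda>n. f n ` B n"] W(2) by (simp add: wo_rel_def)
  qed
  ultimately have "embed r r' g"
    using embed_iff_compat_inj_on_ofilter[OF W] by blast
  then show ?thesis
    using g by (rule that)
qed

lemma is_prefix_chain_Union:
  assumes W: "Well_order r" "Well_order r'" and B: "mono (B :: nat \<Rightarrow> nat set)" "\<And>n. ofilter r (B n)"
    and FB: "Field r = (\<Union>n. B n)"
    and prefix: "\<And>n. is_prefix (Restr r (B n), L) (r', L')"
  shows "is_prefix (r, L) (r', L')"
proof -
  have "\<exists>f. embed (Restr r (B n)) r' f \<and> (\<forall>p\<in>B n. L' (f p) = L p)" for n
    using prefix[of n] unfolding is_prefix_iff_embed[OF Well_order_Restr[OF W(1)] W(2)]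
      Field_Restr_ofilter[OF W(1) B(2)] .
  then obtain f where "\<forall>n. embed (Restr r (B n)) r' (f n) \<and> (\<forall>p\<in>B n. L' (f n p) = L p)"
    using choice[of "\<lambda>n f. embed (Restr r (B n)) r' f \<and> (\<forall>p\<in>B n. L' (f p) = L p)"] by blast
  then have f: "\<And>n. embed (Restr r (B n)) r' (f n)" and lab: "\<And>n. \<forall>p\<in>B n. L' (f n p) = L p"
    by blast+
  obtain g where g: "embed r r' g" "\<And>n x. x \<in> B n \<Longrightarrow> g x = f n x"
    by (rule embed_chain_Union[OF W B FB f]) blast
  have "\<forall>p\<in>Field r. L' (g p) = L p"
    unfolding FB using g(2) lab by auto
  then show ?thesis
    using g(1) is_prefix_iff_embed[OF W] by blast
qed

lemma embed_endo_left_inverse: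
  assumes "Well_order r" "Well_order r'" "embed r' r f" "embed r r' g" "a \<in> Field r"
  shows "f (g a) = a"
proof -
  have "embed r r (f \<circ> g)"
    using comp_embed[OF assms(4,3)] .
  from embed_unique[OF assms(1,1) this id_embed] show ?thesis
    using assms(5) by simp
qed

lemma underS_inject:
  assumes "Well_order r" "a \<in> Field r" "b \<in> Field r" "underS r a = underS r b"
  shows "a = b"
proof -
  have lin: "Linear_order r" and "antisym r"
    using assms(1) wo_rel.LIN wo_rel.ANTISYM unfolding wo_rel_def by blast+
  have "(a, b) \<in> r"
    using underS_incl_iff[OF lin assms(2,3)] assms(4) by simp
  moreover have "(b, a) \<in> r"
    using underS_incl_iff[OF lin assms(3,2)] assms(4) by simp
  ultimately show ?thesis
    using \<open>antisym r\<close> by (simp add: antisymD)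
qed

lemma not_str_less_prefix:
  assumes W: "Well_order r" "Well_order r'"
    and f: "embed r' r f" and lab: "\<forall>p\<in>Field r'. L (f p) = L' p"
  shows "\<not> str_less (r, L) (r', L')"
proof
  assume "str_less (r, L) (r', L')"
  then obtain p p' g where p: "p \<in> Field r" and p': "p' \<in> Field r'" and less: "L p < L' p'"
    and g: "iso (Restr r (underS r p)) (Restr r' (underS r' p')) g"
    unfolding str_less_def below_eq_underS restr_pair fst_conv snd_conv word_iso_iff_iso by blast
  define U where "U = underS r p"
  define U' where "U' = underS r' p'"
  have U: "ofilter r U" and U': "ofilter r' U'"
    unfolding U_def U'_def using W by (simp_all add: wo_rel.underS_ofilter wo_rel_def)
  have WU: "Well_order (Restr r U)"
    using Well_order_Restr[OF W(1)] .
  have FU: "Field (Restr r U) = U"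
    using Field_Restr_ofilter[OF W(1) U] .
  have gU: "g ` U = U'"
    using iso_Field[OF g] Field_Restr_ofilter[OF W(1) U] Field_Restr_ofilter[OF W(2) U']
    unfolding U_def U'_def by simp
  have "embed (Restr r U) (Restr r' U') g"
    using g unfolding iso_def U_def U'_def by blast
  moreover have "embed (Restr r' U') r' id"
    using U' ofilter_embed[OF W(2)] by blast
  ultimately have "embed (Restr r U) r (f \<circ> (id \<circ> g))"
    using comp_embed[OF comp_embed f] by blast
  moreover have "embed (Restr r U) r id"
    using U ofilter_embed[OF W(1)] by blast
  ultimately have fg: "f (g a) = a" if "a \<in> U" for a
    using embed_unique[OF WU W(1)] that FU by (metis comp_apply id_apply)
  have "underS r (f p') = f ` U'"
    using embed_underS[OF W(2) f p'] unfolding U'_def bij_betw_def by simp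
  also have "\<dots> = U"
    using fg unfolding gU[symmetric] image_image by simp
  finally have "f p' = p"
    using underS_inject[OF W(1) embed_in_Field[OF f p'] p] unfolding U_def by blast
  then show False
    using lab p' less by auto
qed

lemma not_lex_le_proper_prefix:
  assumes W: "Well_order r" "Well_order r'"
    and f: "embed r' r f" and lab: "\<forall>p\<in>Field r'. L (f p) = L' p"
    and proper: "f ` Field r' \<noteq> Field r"
  shows "\<not> lex_le (r, L) (r', L')"
proof
  assume "lex_le (r, L) (r', L')"
  then have "is_prefix (r, L) (r', L')"
    using not_str_less_prefix[OF W f lab] unfolding lex_le_def by blast
  then obtain g where g: "embed r r' g"
    using is_prefix_iff_embed[OF W] by blast
  have "a \<in> f ` Field r'" if "a \<in> Field r" for a
    using rev_image_eqI[of "g a" "Field r'" a f] embed_in_Field[OF g that]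
      embed_endo_left_inverse[OF W f g that] by simp
  then show False
    using embed_Field[OF f] proper by blast
qed

section \<open>Powers of a word\<close>

locale power_word =
  fixes r :: "nat rel" and L :: "nat \<Rightarrow> 'a::linorder" and Y :: "nat rel" and M :: "nat \<Rightarrow> 'a"
    and \<alpha> :: "nat rel" and h :: "nat \<Rightarrow> nat \<times> nat"
  assumes Well_order: "Well_order r" and Well_order_Y: "Well_order Y" and Well_order_\<alpha>: "Well_order \<alpha>"
    and bij: "bij_betw h (Field r) (Field \<alpha> \<times> Field Y)"
    and order: "\<And>p q. p \<in> Field r \<Longrightarrow> q \<in> Field r \<Longrightarrow> (p, q) \<in> r \<longleftrightarrow>
        ((fst (h p) \<noteq> fst (h q) \<and> (fst (h p), fst (h q)) \<in> \<alpha>) \<or>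
         (fst (h p) = fst (h q) \<and> (snd (h p), snd (h q)) \<in> Y))"
    and label: "\<And>p. p \<in> Field r \<Longrightarrow> L p = M (snd (h p))"
begin

definition copy :: "nat \<Rightarrow> nat" where "copy p = fst (h p)"
definition place :: "nat \<Rightarrow> nat" where "place p = snd (h p)"
definition at :: "nat \<Rightarrow> nat \<Rightarrow> nat" where "at a t = inv_into (Field r) h (a, t)"

lemma copy_in_Field: "p \<in> Field r \<Longrightarrow> copy p \<in> Field \<alpha>"
  and place_in_Field: "p \<in> Field r \<Longrightarrow> place p \<in> Field Y"
  using bij_betwE[OF bij] unfolding copy_def place_def by (auto simp: mem_Times_iff)

lemma at_in_Field: "a \<in> Field \<alpha> \<Longrightarrow> t \<in> Field Y \<Longrightarrow> at a t \<in> Field r"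
  using bij_betw_inv_into[OF bij] unfolding at_def bij_betw_def by auto

lemma h_at: "a \<in> Field \<alpha> \<Longrightarrow> t \<in> Field Y \<Longrightarrow> h (at a t) = (a, t)"
  using bij_betw_inv_into_right[OF bij] unfolding at_def by auto

lemma copy_at: "a \<in> Field \<alpha> \<Longrightarrow> t \<in> Field Y \<Longrightarrow> copy (at a t) = a"
  and place_at: "a \<in> Field \<alpha> \<Longrightarrow> t \<in> Field Y \<Longrightarrow> place (at a t) = t"
  using h_at unfolding copy_def place_def by auto

lemma at_copy_place: "p \<in> Field r \<Longrightarrow> at (copy p) (place p) = p"
  using bij_betw_inv_into_left[OF bij] unfolding at_def copy_def place_def by simp

lemma order_same_copy:
  "p \<in> Field r \<Longrightarrow> q \<in> Field r \<Longrightarrow> copy p = copy q \<Longrightarrow> (p, q) \<in> r \<longleftrightarrow> (place p, place q) \<in> Y"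
  using order unfolding copy_def place_def by simp

lemma order_other_copy:
  "p \<in> Field r \<Longrightarrow> q \<in> Field r \<Longrightarrow> copy p \<noteq> copy q \<Longrightarrow> (p, q) \<in> r \<longleftrightarrow> (copy p, copy q) \<in> \<alpha>"
  using order unfolding copy_def place_def by simp

lemma label_place: "p \<in> Field r \<Longrightarrow> L p = M (place p)"
  using label unfolding place_def .

lemma single_copy_iso:
  assumes "Field \<alpha> = {a}"
  shows "word_iso (Y, M) (r, L)"
  unfolding word_iso_def fst_conv snd_conv
proof (intro exI[of _ "at a"] conjI ballI)
  have a: "a \<in> Field \<alpha>" using assms by simp
  have "inj_on (at a) (Field Y)"
  proof (rule inj_onI)
    fix s t assume "s \<in> Field Y" "t \<in> Field Y" "at a s = at a t"
    then show "s = t"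
      using place_at[OF a] by metis
  qed
  moreover have "at a ` Field Y = Field r"
  proof
    show "at a ` Field Y \<subseteq> Field r"
      using at_in_Field[OF a] by blast
    show "Field r \<subseteq> at a ` Field Y"
    proof
      fix p assume p: "p \<in> Field r"
      then have "p = at a (place p)"
        using at_copy_place[OF p] copy_in_Field[OF p] assms by simp
      then show "p \<in> at a ` Field Y"
        using place_in_Field[OF p] by blast
    qed
  qed
  ultimately show "bij_betw (at a) (Field Y) (Field r)"
    unfolding bij_betw_def by blast
  fix s t assume s: "s \<in> Field Y" and t: "t \<in> Field Y"
  show "(s, t) \<in> Y \<longleftrightarrow> (at a s, at a t) \<in> r"
    using order_same_copy[OF at_in_Field[OF a s] at_in_Field[OF a t]] copy_at[OF a] place_at[OF a] s t
    by simp
next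
  fix t assume "t \<in> Field Y"
  then show "L (at a t) = M t"
    using label_place at_in_Field place_at assms by simp
qed

lemma is_power_Restr_whole_copies:
  assumes X: "X \<subseteq> Field r" and whole: "\<forall>p\<in>X. \<forall>t\<in>Field Y. at (copy p) t \<in> X"
  shows "is_power (Restr r X, L) (Y, M) (Restr \<alpha> (copy ` X))"
  unfolding is_power_def fst_conv snd_conv
proof (intro exI[of _ h] conjI ballI)
  have FX: "Field (Restr r X) = X"
    using Well_order_Field_Restr[OF Well_order X] .
  have "copy ` X \<subseteq> Field \<alpha>"
    using copy_in_Field X by blast
  then have FI: "Field (Restr \<alpha> (copy ` X)) = copy ` X"
    by (rule Well_order_Field_Restr[OF Well_order_\<alpha>])
  have "h ` X = copy ` X \<times> Field Y"
  proof
    show "h ` X \<subseteq> copy ` X \<times> Field Y"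
    proof
      fix z assume "z \<in> h ` X"
      then obtain p where p: "p \<in> X" and z: "z = (copy p, place p)"
        unfolding copy_def place_def by auto
      then show "z \<in> copy ` X \<times> Field Y"
        using place_in_Field X by blast
    qed
    show "copy ` X \<times> Field Y \<subseteq> h ` X"
    proof
      fix z assume "z \<in> copy ` X \<times> Field Y"
      then obtain p t where p: "p \<in> X" and t: "t \<in> Field Y" and z: "z = (copy p, t)"
        by blast
      have "h (at (copy p) t) = z"
        using h_at[OF copy_in_Field t] p X z by blast
      moreover have "at (copy p) t \<in> X"
        using whole p t by blast
      ultimately show "z \<in> h ` X"
        by blast
    qed
  qed
  moreover have "inj_on h X"
    using bij X unfolding bij_betw_def by (blast intro: inj_on_subset)
  ultimately show "bij_betw h (Field (Restr r X)) (Field (Restr \<alpha> (copy ` X)) \<times> Field Y)"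
    unfolding FX FI bij_betw_def by blast
  fix p q assume "p \<in> Field (Restr r X)" "q \<in> Field (Restr r X)"
  then have p: "p \<in> X" and q: "q \<in> X"
    unfolding FX .
  have "(fst (h p), fst (h q)) \<in> Restr \<alpha> (copy ` X) \<longleftrightarrow> (fst (h p), fst (h q)) \<in> \<alpha>"
    using p q unfolding copy_def by blast
  moreover have "(p, q) \<in> Restr r X \<longleftrightarrow> (p, q) \<in> r"
    using p q by blast
  ultimately show "(p, q) \<in> Restr r X \<longleftrightarrow>
      (fst (h p) \<noteq> fst (h q) \<and> (fst (h p), fst (h q)) \<in> Restr \<alpha> (copy ` X) \<or>
       fst (h p) = fst (h q) \<and> (snd (h p), snd (h q)) \<in> Y)"
    using order[of p q] p q X by (simp add: subset_iff)
next
  fix p assume "p \<in> Field (Restr r X)"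
  then have "p \<in> Field r"
    using Field_Restr_subset[of r X] X by blast
  then show "L p = M (snd (h p))"
    by (rule label)
qed

lemma copy_below_first_copy:
  assumes a0: "\<forall>b\<in>Field \<alpha>. (a0, b) \<in> \<alpha>"
    and vw: "v \<in> Field r" "w \<in> Field r" "copy w = a0" "(v, w) \<in> r"
  shows "copy v = a0"
proof (rule ccontr)
  assume ne: "copy v \<noteq> a0"
  then have "(copy v, a0) \<in> \<alpha>"
    using order_other_copy[OF vw(1,2)] vw(3,4) by simp
  moreover have "(a0, copy v) \<in> \<alpha>"
    using a0 copy_in_Field[OF vw(1)] by blast
  ultimately show False
    using ne wo_rel.ANTISYM[of \<alpha>] Well_order_\<alpha> unfolding wo_rel_def antisym_def by blast
qed

lemma shifted_copy_misses:
  assumes Z: "Z \<subseteq> Field r" "\<forall>q\<in>Z. copy q = a" and a0: "a0 \<in> Field \<alpha>"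
    and t: "t \<in> Field Y" "at a t \<notin> Z"
  shows "at a0 t \<notin> (\<lambda>q. at a0 (place q)) ` Z"
proof
  assume "at a0 t \<in> (\<lambda>q. at a0 (place q)) ` Z"
  then obtain q where q: "q \<in> Z" "at a0 (place q) = at a0 t"
    by (metis (no_types, lifting) imageE)
  have qF: "q \<in> Field r"
    using q(1) Z(1) by blast
  have "place q = t"
    using place_at[OF a0] place_in_Field[OF qF] t(1) q(2) by metis
  then have "q = at a t"
    using at_copy_place[OF qF] Z(2) q(1) by simp
  then show False
    using q(1) t(2) by blast
qed

lemma embed_into_first_copy:
  assumes X: "ofilter r X"
    and a0: "a0 \<in> Field \<alpha>" "\<forall>b\<in>Field \<alpha>. (a0, b) \<in> \<alpha>"
    and first: "\<forall>t\<in>Field Y. at a0 t \<in> X"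
    and a: "a \<in> Field \<alpha>" and Z: "Z \<subseteq> X" "\<forall>q\<in>Z. copy q = a"
    and Z_down: "\<And>q t. q \<in> Z \<Longrightarrow> t \<in> Field Y \<Longrightarrow> (t, place q) \<in> Y \<Longrightarrow> at a t \<in> Z"
  shows "embed (Restr r Z) (Restr r X) (\<lambda>q. at a0 (place q))"
    and "\<forall>q\<in>Z. L (at a0 (place q)) = L q"
proof -
  define \<phi> where "\<phi> q = at a0 (place q)" for q
  have XF: "X \<subseteq> Field r"
    using X unfolding ofilter_def by blast
  have FX: "Field (Restr r X) = X"
    using Well_order_Field_Restr[OF Well_order XF] .
  have FZ: "Field (Restr r Z) = Z"
    using Well_order_Field_Restr[OF Well_order] XF Z(1) by simp
  have ZF: "q \<in> Field r" if "q \<in> Z" for q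
    using that Z(1) XF by blast
  have \<phi>F: "\<phi> q \<in> Field r" and \<phi>X: "\<phi> q \<in> X" and place_\<phi>: "place (\<phi> q) = place q"
    and copy_\<phi>: "copy (\<phi> q) = a0" if "q \<in> Z" for q
    using at_in_Field[OF a0(1)] place_in_Field[OF ZF[OF that]] first place_at[OF a0(1)] copy_at[OF a0(1)]
    unfolding \<phi>_def by auto
  have \<phi>_order: "(\<phi> p, \<phi> q) \<in> r \<longleftrightarrow> (p, q) \<in> r" if "p \<in> Z" "q \<in> Z" for p q
    using order_same_copy[OF \<phi>F[OF that(1)] \<phi>F[OF that(2)]] order_same_copy[OF ZF[OF that(1)] ZF[OF that(2)]]
      copy_\<phi> place_\<phi> Z(2) that by simp
  have "compat (Restr r Z) (Restr r X) \<phi>"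
    unfolding compat_def using \<phi>_order \<phi>X by blast
  moreover have "inj_on \<phi> (Field (Restr r Z))"
  proof (rule inj_onI)
    fix p q assume pq: "p \<in> Field (Restr r Z)" "q \<in> Field (Restr r Z)" "\<phi> p = \<phi> q"
    then have "p \<in> Z" "q \<in> Z" unfolding FZ by blast+
    then have "at (copy p) (place p) = at (copy q) (place q)"
      using place_\<phi> pq(3) Z(2) by metis
    then show "p = q"
      using at_copy_place ZF \<open>p \<in> Z\<close> \<open>q \<in> Z\<close> by metis
  qed
  moreover have "ofilter (Restr r X) (\<phi> ` Field (Restr r Z))"
    unfolding ofilter_def FX FZ under_def
  proof (intro conjI ballI subsetI)
    show "w \<in> X" if "w \<in> \<phi> ` Z" for w
      using \<phi>X that by blast
    fix w v assume w: "w \<in> \<phi> ` Z" and "v \<in> {v. (v, w) \<in> Restr r X}"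
    then have v: "(v, w) \<in> r" "v \<in> X" by auto
    obtain q where q: "q \<in> Z" "w = \<phi> q" using w by blast
    have vF: "v \<in> Field r" using v(2) XF by blast
    have "copy v = a0"
      using copy_below_first_copy[OF a0(2) vF \<phi>F[OF q(1)] copy_\<phi>[OF q(1)]] v(1) q(2) by simp
    then have "(place v, place q) \<in> Y"
      using order_same_copy[OF vF \<phi>F[OF q(1)]] copy_\<phi>[OF q(1)] place_\<phi>[OF q(1)] v(1) q(2) by simp
    then have "at a (place v) \<in> Z"
      using Z_down[OF q(1) place_in_Field[OF vF]] by blast
    moreover have "\<phi> (at a (place v)) = v"
      using place_at[OF a place_in_Field[OF vF]] at_copy_place[OF vF] \<open>copy v = a0\<close> unfolding \<phi>_def by simp
    ultimately show "v \<in> \<phi> ` Z"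
      by (metis image_eqI)
  qed
  ultimately show "embed (Restr r Z) (Restr r X) (\<lambda>q. at a0 (place q))"
    using embed_iff_compat_inj_on_ofilter[OF Well_order_Restr[OF Well_order] Well_order_Restr[OF Well_order]]
    unfolding \<phi>_def by blast
  show "\<forall>q\<in>Z. L (at a0 (place q)) = L q"
    using label_place \<phi>F place_\<phi> ZF unfolding \<phi>_def by simp
qed

lemma first_copy_below:
  assumes X: "ofilter r X"
    and a0: "a0 \<in> Field \<alpha>" "\<forall>b\<in>Field \<alpha>. (a0, b) \<in> \<alpha>"
    and x: "x \<in> X" "copy x \<noteq> a0"
  shows "\<forall>t\<in>Field Y. at a0 t \<in> X"
proof
  fix t assume t: "t \<in> Field Y"
  have xF: "x \<in> Field r"
    using X x(1) unfolding ofilter_def by blast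
  have "at a0 t \<in> Field r" "copy (at a0 t) = a0"
    using at_in_Field copy_at a0(1) t by auto
  then have "(at a0 t, x) \<in> r"
    using order_other_copy[OF _ xF] x(2) a0(2) copy_in_Field[OF xF] by simp
  then show "at a0 t \<in> X"
    using X x(1) unfolding ofilter_def under_def by blast
qed

lemma not_primitive_Restr_whole_copies:
  assumes X: "X \<subseteq> Field r" and whole: "\<forall>p\<in>X. \<forall>t\<in>Field Y. at (copy p) t \<in> X"
    and y: "wf_word (Y, M)" and copies: "a \<in> copy ` X" "b \<in> copy ` X" "a \<noteq> b"
  shows "\<not> primitive (Restr r X, L)"
proof
  assume "primitive (Restr r X, L)"
  then have "card (Field (Restr \<alpha> (copy ` X))) = 1"
    using is_power_Restr_whole_copies[OF X whole] y Well_order_Restr[OF Well_order_\<alpha>, of "copy ` X"]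
    unfolding primitive_def by blast
  moreover have "copy ` X \<subseteq> Field \<alpha>"
    using copy_in_Field X by blast
  ultimately have "card (copy ` X) = 1"
    using Well_order_Field_Restr[OF Well_order_\<alpha>] by simp
  then show False
    using copies by (metis card_1_singletonE singletonD)
qed

lemma copy_of_suffix_in_cut_copy:
  assumes X: "ofilter r X" and cut: "t \<in> Field Y" "at a t \<notin> X"
    and s: "s \<in> Field r" "copy s = a" and q: "q \<in> X" "(s, q) \<in> r"
  shows "copy q = a"
proof (rule ccontr)
  assume ne: "copy q \<noteq> a"
  have qF: "q \<in> Field r"
    using X q(1) unfolding ofilter_def by blast
  have aF: "a \<in> Field \<alpha>"
    using copy_in_Field[OF s(1)] s(2) by simp
  have "(a, copy q) \<in> \<alpha>"
    using order_other_copy[OF s(1) qF] s(2) ne q(2) by simp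
  moreover have uF: "at a t \<in> Field r" and "copy (at a t) = a"
    using at_in_Field copy_at aF cut(1) by auto
  ultimately have "(at a t, q) \<in> r"
    using order_other_copy[OF uF qF] ne by simp
  then have "at a t \<in> X"
    using X q(1) unfolding ofilter_def under_def by blast
  then show False
    using cut(2) by blast
qed

text \<open>If the initial segment \<open>X\<close> contains the first copy of \<open>Y\<close> but misses position \<open>t\<close> of the
  copy containing \<open>x\<close>, then the suffix of \<open>X\<close> from the start \<open>s\<close> of that copy is a proper prefix
  of \<open>Y\<close>, hence of the word on \<open>X\<close> itself.\<close>

lemma not_prime_if_cuts_copy:
  assumes X: "ofilter r X"
    and a0: "a0 \<in> Field \<alpha>" "\<forall>b\<in>Field \<alpha>. (a0, b) \<in> \<alpha>"
    and first: "\<forall>t\<in>Field Y. at a0 t \<in> X"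
    and x: "x \<in> X" and t: "t \<in> Field Y" and cut: "at (copy x) t \<notin> X"
  shows "\<not> prime_word (Restr r X, L)"
proof
  assume prime: "prime_word (Restr r X, L)"
  have XF: "X \<subseteq> Field r"
    using X unfolding ofilter_def by blast
  define a where "a = copy x"
  have xF: "x \<in> Field r"
    using x XF by blast
  have aF: "a \<in> Field \<alpha>"
    unfolding a_def using copy_in_Field[OF xF] .
  have "a \<noteq> a0"
    using first t cut unfolding a_def by blast
  obtain y0 where y0: "y0 \<in> Field Y" "\<forall>t\<in>Field Y. (y0, t) \<in> Y"
    using Well_order_least[OF Well_order_Y, of "Field Y"] t by blast
  define s where "s = at a y0"
  have sF: "s \<in> Field r" and copy_s: "copy s = a" and place_s: "place s = y0"
    unfolding s_def using at_in_Field copy_at place_at aF y0(1) by auto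
  have "(s, x) \<in> r"
    using order_same_copy[OF sF xF] copy_s place_s y0(2) place_in_Field[OF xF] unfolding a_def by simp
  then have sX: "s \<in> X"
    using X x unfolding ofilter_def under_def by blast
  define c where "c = at a0 y0"
  have cF: "c \<in> Field r" and copy_c: "copy c = a0" and cX: "c \<in> X"
    unfolding c_def using at_in_Field copy_at a0(1) y0(1) first by auto
  have cs: "(c, s) \<in> r" "c \<noteq> s"
    using order_other_copy[OF cF sF] copy_c copy_s \<open>a \<noteq> a0\<close> a0(2) aF by auto
  define Z where "Z = {q \<in> X. (s, q) \<in> r}"
  have ZX: "Z \<subseteq> X"
    unfolding Z_def by blast
  have copy_Z: "copy q = a" if "q \<in> Z" for q
    using copy_of_suffix_in_cut_copy[OF X t] cut sF copy_s that unfolding a_def Z_def by blast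
  have "lex_le (Restr r X, L) (Restr r Z, L)"
    using prime proper_suffix_Restr[OF cs cX sX] unfolding prime_word_def Z_def by blast
  moreover have "at a u \<in> Z" if q: "q \<in> Z" and u: "u \<in> Field Y" "(u, place q) \<in> Y" for q u
  proof -
    have qF: "q \<in> Field r"
      using q ZX XF by blast
    have uF: "at a u \<in> Field r" and copy_u: "copy (at a u) = a" and place_u: "place (at a u) = u"
      using at_in_Field copy_at place_at aF u(1) by auto
    have "(at a u, q) \<in> r"
      using order_same_copy[OF uF qF] copy_u copy_Z[OF q] place_u u(2) by simp
    moreover have "(s, at a u) \<in> r"
      using order_same_copy[OF sF uF] copy_u copy_s place_u place_s y0(2) u(1) by simp
    ultimately show "at a u \<in> Z"
      using X q unfolding Z_def ofilter_def under_def by blast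
  qed
  then have "embed (Restr r Z) (Restr r X) (\<lambda>q. at a0 (place q))"
    and "\<forall>q\<in>Z. L (at a0 (place q)) = L q"
    using embed_into_first_copy[OF X a0 first aF ZX] copy_Z by blast+
  moreover have "at a0 t \<notin> (\<lambda>q. at a0 (place q)) ` Z"
  proof (rule shifted_copy_misses[OF _ _ a0(1) t])
    show "Z \<subseteq> Field r" "\<forall>q\<in>Z. copy q = a" "at a t \<notin> Z"
      using ZX XF copy_Z cut unfolding a_def by blast+
  qed
  then have "(\<lambda>q. at a0 (place q)) ` Z \<noteq> X"
    using first t by blast
  moreover have "Field (Restr r Z) = Z" "Field (Restr r X) = X"
    using Well_order_Field_Restr[OF Well_order] ZX XF by auto
  ultimately show False
    using not_lex_le_proper_prefix[OF Well_order_Restr[OF Well_order] Well_order_Restr[OF Well_order],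
        of Z X "\<lambda>q. at a0 (place q)" L L]
    by simp
qed

end

section \<open>Unions of chains of prime words\<close>

lemma primitive_Field_nonempty:
  assumes "primitive (r, L)"
  shows "Field r \<noteq> {}"
proof
  assume empty: "Field r = {}"
  have "Well_order ({} :: nat rel)"
    by (simp add: well_order_on_def linear_order_on_def partial_order_on_def preorder_on_def
        refl_on_def trans_def antisym_def total_on_def)
  moreover have "is_power (r, L) ({}, L) {}"
    unfolding is_power_def using empty by (simp add: bij_betw_def)
  ultimately have "card (Field ({} :: nat rel)) = 1"
    using assms unfolding primitive_def wf_word_def
    by (metis (no_types, lifting) fst_conv)
  then show False by simp
qed

locale prime_chain =
  fixes W :: "nat rel" and L :: "nat \<Rightarrow> 'a::linorder" and B :: "nat \<Rightarrow> nat set"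
  assumes Well_order: "Well_order W"
    and mono: "mono B"
    and ofilter: "\<And>n. ofilter W (B n)"
    and Field_eq: "Field W = (\<Union>n. B n)"
    and prime: "\<And>n. prime_word (Restr W (B n), L)"
begin

lemma prime_chain_shift: "prime_chain W L (\<lambda>n. B (k + n))"
proof
  show "mono (\<lambda>n. B (k + n))"
    by (rule monoI) (simp add: monoD[OF mono])
  show "Field W = (\<Union>n. B (k + n))"
  proof
    show "Field W \<subseteq> (\<Union>n. B (k + n))"
    proof
      fix x assume "x \<in> Field W"
      then obtain m where "x \<in> B m"
        using Field_eq by blast
      then have "x \<in> B (k + m)"
        using monoD[OF mono, of m "k + m"] by auto
      then show "x \<in> (\<Union>n. B (k + n))" by blast
    qed
  qed (use Field_eq in blast)
qed (use Well_order ofilter prime in blast)+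

lemma lex_le_suffix_from_first_stage:
  assumes q: "(q, p) \<in> W" "q \<noteq> p" and p: "p \<in> B 0"
  shows "lex_le (W, L) (Restr W (above W p), L)"
proof -
  define P where "P = above W p"
  have WP: "Well_order (Restr W P)"
    using Well_order_Restr[OF Well_order] .
  have "P \<subseteq> Field W"
    unfolding P_def above_def by (auto intro: FieldI2)
  then have FP: "Field (Restr W P) = P"
    by (rule Well_order_Field_Restr[OF Well_order])
  have ofilter_n: "ofilter (Restr W P) (P \<inter> B n)" for n
    using ofilter[of n] unfolding ofilter_def under_def FP by blast
  have stage_n: "lex_le (Restr W (B n), L) (Restr (Restr W P) (P \<inter> B n), L)" for n
  proof -
    have "p \<in> B n"
      using p monoD[OF mono, of 0 n] by auto
    moreover from this have "q \<in> B n"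
      using ofilter[of n] q(1) unfolding ofilter_def under_def by blast
    ultimately have "proper_suffix (Restr W (B n), L) (Restr W {x \<in> B n. (p, x) \<in> W}, L)"
      using proper_suffix_Restr[OF q] by blast
    moreover have "Restr W {x \<in> B n. (p, x) \<in> W} = Restr (Restr W P) (P \<inter> B n)"
      unfolding P_def above_def by blast
    ultimately show ?thesis
      using prime[of n] unfolding prime_word_def by simp
  qed
  show ?thesis
  proof (cases "\<exists>n. str_less (Restr W (B n), L) (Restr (Restr W P) (P \<inter> B n), L)")
    case True
    then obtain n where "str_less (Restr W (B n), L) (Restr (Restr W P) (P \<inter> B n), L)"
      by blast
    then have "str_less (W, L) (Restr W P, L)"
      using str_less_Restr_ofilter[OF ofilter[of n] ofilter_n[of n]] by blast
    then show ?thesis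
      unfolding P_def lex_le_def by blast
  next
    case False
    have "is_prefix (Restr W (B n), L) (Restr W P, L)" for n
    proof -
      have "is_prefix (Restr W (B n), L) (Restr (Restr W P) (P \<inter> B n), L)"
        using False stage_n[of n] unfolding lex_le_def by simp
      then show ?thesis
        by (rule is_prefix_Restr_ofilter[OF Well_order_Restr[OF Well_order] WP ofilter_n])
    qed
    then have "is_prefix (W, L) (Restr W P, L)"
      using is_prefix_chain_Union[OF Well_order WP mono ofilter Field_eq] by blast
    then show ?thesis
      unfolding P_def lex_le_def by blast
  qed
qed

lemma lex_le_proper_suffix:
  assumes "proper_suffix (W, L) z"
  shows "lex_le (W, L) z"
proof -
  obtain p q where p: "p \<in> Field W" and q: "(q, p) \<in> W" "q \<noteq> p"
    and z: "z = (Restr W (above W p), L)"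
    using assms unfolding proper_suffix_def restr_pair fst_conv above_def by blast
  obtain k where "p \<in> B k"
    using p Field_eq by blast
  then have "lex_le (W, L) (Restr W (above W p), L)"
    using prime_chain.lex_le_suffix_from_first_stage[OF prime_chain_shift q] by simp
  then show ?thesis
    unfolding z .
qed

lemma primitive: "primitive (W, L)"
  unfolding primitive_def
proof (intro allI impI)
  fix y :: "'a word" and \<alpha> :: "nat rel"
  assume "wf_word y \<and> Well_order \<alpha> \<and> is_power (W, L) y \<alpha>"
  then have y: "wf_word (fst y, snd y)" and W\<alpha>: "Well_order \<alpha>" and "is_power (W, L) y \<alpha>"
    by simp_all
  then obtain h where "power_word W L (fst y) (snd y) \<alpha> h"
    unfolding power_word_def is_power_def wf_word_def fst_conv snd_conv using Well_order by blast
  then interpret power_word W L "fst y" "snd y" \<alpha> h .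
  have "Field (Restr W (B 0)) \<noteq> {}"
    using prime[of 0] primitive_Field_nonempty unfolding prime_word_def by blast
  then obtain x0 where x0: "x0 \<in> Field W"
    using Field_Restr_subset[of W "B 0"] ofilter[of 0] unfolding ofilter_def by blast
  obtain a0 where a0: "a0 \<in> Field \<alpha>" "\<forall>b\<in>Field \<alpha>. (a0, b) \<in> \<alpha>"
    using Well_order_least[OF W\<alpha>, of "Field \<alpha>"] copy_in_Field[OF x0] by blast
  show "card (Field \<alpha>) = 1 \<and> word_iso y (W, L)"
  proof (cases "Field \<alpha> = {a0}")
    case True
    then show ?thesis
      using single_copy_iso by simp
  next
    case False
    then obtain a1 where a1: "a1 \<in> Field \<alpha>" "a1 \<noteq> a0"
      using a0(1) by blast
    define x1 where "x1 = at a1 (place x0)"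
    have x1F: "x1 \<in> Field W" and copy_x1: "copy x1 = a1"
      unfolding x1_def using at_in_Field copy_at a1(1) place_in_Field[OF x0] by auto
    obtain m where x1X: "x1 \<in> B m"
      using x1F Field_eq by blast
    have first: "\<forall>t\<in>Field (fst y). at a0 t \<in> B m"
      using first_copy_below[OF ofilter a0 x1X] copy_x1 a1(2) by blast
    have "\<not> prime_word (Restr W (B m), L)"
    proof (cases "\<forall>p\<in>B m. \<forall>t\<in>Field (fst y). at (copy p) t \<in> B m")
      case True
      have "B m \<subseteq> Field W"
        using ofilter[of m] unfolding ofilter_def by blast
      moreover have "a0 \<in> copy ` B m"
        using first place_in_Field[OF x0] copy_at[OF a0(1) place_in_Field[OF x0]] by (metis image_eqI)
      moreover have "a1 \<in> copy ` B m"
        using x1X copy_x1 by blast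
      ultimately show ?thesis
        using not_primitive_Restr_whole_copies[OF _ True y] a1(2) unfolding prime_word_def by blast
    next
      case False
      then show ?thesis
        using not_prime_if_cuts_copy[OF ofilter a0 first] by blast
    qed
    then show ?thesis
      using prime by blast
  qed
qed

theorem prime_word: "prime_word (W, L)"
  unfolding prime_word_def using primitive lex_le_proper_suffix by blast

end

section \<open>Block products\<close>

definition block_idx :: "nat \<Rightarrow> nat" where
  "block_idx x = fst (prod_decode x)"

definition block_pos :: "nat \<Rightarrow> nat" where
  "block_pos x = snd (prod_decode x)"

lemma block_eqI: "block_idx x = block_idx y \<Longrightarrow> block_pos x = block_pos y \<Longrightarrow> x = y"
  unfolding block_idx_def block_pos_def by (metis prod.expand prod_decode_inverse)

lemma in_block_prod_iff:
  "(x, y) \<in> fst (block_prod I u) \<longleftrightarrow>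
     block_idx x \<in> I \<and> block_idx y \<in> I \<and>
     block_pos x \<in> Field (fst (u (block_idx x))) \<and> block_pos y \<in> Field (fst (u (block_idx y))) \<and>
     (block_idx x < block_idx y \<or>
      block_idx x = block_idx y \<and> (block_pos x, block_pos y) \<in> fst (u (block_idx x)))"
proof -
  obtain i p j q where "x = prod_encode (i, p)" "y = prod_encode (j, q)"
    by (metis prod_decode_inverse surj_pair)
  then show ?thesis
    unfolding block_prod_def block_idx_def block_pos_def by (auto simp: prod_encode_eq)
qed

lemma snd_block_prod: "snd (block_prod I u) = snd (block_prod J u)"
  unfolding block_prod_def by simp

lemma Restr_block_prod:
  assumes "J \<subseteq> I"
  shows "Restr (fst (block_prod I u)) {x. block_idx x \<in> J} = fst (block_prod J u)"
  using assms by (auto simp: in_block_prod_iff)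

context
  fixes u :: "nat \<Rightarrow> 'a word"
  assumes wf: "\<And>i. Well_order (fst (u i))"
begin

lemma Field_block_prod:
  "x \<in> Field (fst (block_prod I u)) \<longleftrightarrow> block_idx x \<in> I \<and> block_pos x \<in> Field (fst (u (block_idx x)))"
proof
  assume "x \<in> Field (fst (block_prod I u))"
  then obtain y where "(x, y) \<in> fst (block_prod I u) \<or> (y, x) \<in> fst (block_prod I u)"
    unfolding Field_def by blast
  then show "block_idx x \<in> I \<and> block_pos x \<in> Field (fst (u (block_idx x)))"
    unfolding in_block_prod_iff by blast
next
  assume x: "block_idx x \<in> I \<and> block_pos x \<in> Field (fst (u (block_idx x)))"
  then have "(block_pos x, block_pos x) \<in> fst (u (block_idx x))"
    using wo_rel.REFL[of "fst (u (block_idx x))"] wf unfolding wo_rel_def refl_on_def by blast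
  then have "(x, x) \<in> fst (block_prod I u)"
    using x by (simp add: in_block_prod_iff)
  then show "x \<in> Field (fst (block_prod I u))"
    by (rule FieldI1)
qed

lemma Linear_order_block_prod: "Linear_order (fst (block_prod I u))"
proof -
  let ?R = "fst (block_prod I u)"
  have refl: "(p, p) \<in> fst (u i)" if "p \<in> Field (fst (u i))" for i p
    using wo_rel.REFL[of "fst (u i)"] wf that unfolding wo_rel_def refl_on_def by blast
  have trans: "trans (fst (u i))" and antisym: "antisym (fst (u i))" for i
    using wo_rel.TRANS[of "fst (u i)"] wo_rel.ANTISYM[of "fst (u i)"] wf unfolding wo_rel_def by blast+
  have total: "(p, q) \<in> fst (u i) \<or> (q, p) \<in> fst (u i)"
    if "p \<in> Field (fst (u i))" "q \<in> Field (fst (u i))" for i p q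
    using wo_rel.TOTALS[of "fst (u i)"] wf that unfolding wo_rel_def by blast
  have "Refl ?R"
  proof (rule refl_onI)
    fix x assume "x \<in> Field ?R"
    then show "(x, x) \<in> ?R"
      unfolding Field_block_prod in_block_prod_iff using refl by blast
  qed
  moreover have "trans ?R"
  proof (rule transI)
    fix x y z assume "(x, y) \<in> ?R" "(y, z) \<in> ?R"
    then show "(x, z) \<in> ?R"
      unfolding in_block_prod_iff using trans[of "block_idx x"] transD by (smt (verit) less_trans)
  qed
  moreover have "antisym ?R"
  proof (rule antisymI)
    fix x y assume "(x, y) \<in> ?R" "(y, x) \<in> ?R"
    then show "x = y"
      unfolding in_block_prod_iff using antisym[of "block_idx x"] antisymD block_eqI by (metis less_asym)
  qed
  moreover have "Total ?R"
  proof (rule total_onI)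
    fix x y assume "x \<in> Field ?R" "y \<in> Field ?R" "x \<noteq> y"
    then show "(x, y) \<in> ?R \<or> (y, x) \<in> ?R"
      unfolding Field_block_prod in_block_prod_iff using total block_eqI by (metis linorder_neqE_nat)
  qed
  moreover have "?R \<subseteq> Field ?R \<times> Field ?R"
    by (auto intro: FieldI1 FieldI2)
  ultimately show ?thesis
    unfolding linear_order_on_def partial_order_on_def preorder_on_def by blast
qed

lemma block_prod_has_least:
  assumes A: "A \<subseteq> Field (fst (block_prod I u))" "A \<noteq> {}"
  shows "\<exists>x\<in>A. \<forall>y\<in>A. (x, y) \<in> fst (block_prod I u)"
proof -
  have inA: "block_idx x \<in> I" "block_pos x \<in> Field (fst (u (block_idx x)))" if "x \<in> A" for x
    using A(1) that Field_block_prod[of x I] by auto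
  define i0 where "i0 = (LEAST i. i \<in> block_idx ` A)"
  obtain x where "x \<in> A"
    using A(2) by blast
  then have "i0 \<in> block_idx ` A"
    unfolding i0_def by (rule LeastI[OF imageI])
  then have ne: "block_pos ` {x\<in>A. block_idx x = i0} \<noteq> {}"
    by blast
  have "block_pos ` {x\<in>A. block_idx x = i0} \<subseteq> Field (fst (u i0))"
    using inA(2) by blast
  from Well_order_least[OF wf[of i0] this ne] obtain p0
    where p0: "p0 \<in> block_pos ` {x\<in>A. block_idx x = i0}"
      and least: "\<forall>p\<in>block_pos ` {x\<in>A. block_idx x = i0}. (p0, p) \<in> fst (u i0)" .
  then obtain x0 where x0: "x0 \<in> A" "block_idx x0 = i0" "block_pos x0 = p0"
    by blast
  have "(x0, y) \<in> fst (block_prod I u)" if y: "y \<in> A" for y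
  proof (cases "block_idx y = i0")
    case True
    then have "(block_pos x0, block_pos y) \<in> fst (u (block_idx x0))"
      using least x0 y by auto
    then show ?thesis
      unfolding in_block_prod_iff using inA[OF x0(1)] inA[OF y] x0(2) True by simp
  next
    case False
    moreover have "i0 \<le> block_idx y"
      unfolding i0_def using y by (simp add: Least_le)
    ultimately show ?thesis
      unfolding in_block_prod_iff using inA[OF x0(1)] inA[OF y] x0(2) by simp
  qed
  then show ?thesis
    using x0(1) by blast
qed

lemma Well_order_block_prod: "Well_order (fst (block_prod I u))"
  using Linear_order_Well_order_iff[OF Linear_order_block_prod] block_prod_has_least by blast
end

lemma prime_chain_block_prod:
  assumes wf: "\<forall>n. wf_word (u n)" and prime: "\<forall>n. prime_word (block_prod {..n} u)"
  shows "prime_chain (fst (block_prod UNIV u)) (snd (block_prod UNIV u))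
           (\<lambda>n. {x \<in> Field (fst (block_prod UNIV u)). block_idx x \<le> n})"
proof
  let ?W = "fst (block_prod UNIV u)"
  let ?B = "\<lambda>n. {x \<in> Field ?W. block_idx x \<le> n}"
  have wo: "Well_order (fst (u i))" for i
    using wf unfolding wf_word_def by blast
  show "Well_order ?W"
    using Well_order_block_prod[OF wo] .
  show "mono ?B"
    by (rule monoI) auto
  show "Field ?W = (\<Union>n. ?B n)"
    by blast
  show "ofilter ?W (?B n)" for n
    unfolding ofilter_def under_def by (auto simp: in_block_prod_iff intro: FieldI1)
  have "Restr ?W (?B n) = Restr ?W {x. block_idx x \<in> {..n}}" for n
    by (auto intro: FieldI1 FieldI2)
  then have "(Restr ?W (?B n), snd (block_prod UNIV u)) = block_prod {..n} u" for n
    using Restr_block_prod[of "{..n}" UNIV u] snd_block_prod[of UNIV u "{..n}"] by (simp add: prod_eq_iff)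
  then show "prime_word (Restr ?W (?B n), snd (block_prod UNIV u))" for n
    using prime by simp
qed

theorem mainTheorem5:
  fixes u :: "nat \<Rightarrow> ('a::{linorder,finite}) word"
  assumes "\<forall>n. wf_word (u n)"
    and "\<forall>n. prime_word (block_prod {..n} u)"
  shows "prime_word (block_prod UNIV u)"
  using prime_chain.prime_word[OF prime_chain_block_prod[OF assms]] by simp

end
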